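(* Let $K\subset\mathbb{R}^d$ be non-empty and compact, with $\beta=\dim_{\mathrm{L}} K$. Then there exists a weak tangent $F\in\operatorname{Tan}(K)$ such that $\mathcal{P}^\beta_0(F)\leq 257^\beta<\infty$. (In particular $\mathcal{P}^\beta(F)<\infty$.)
   Context: $B(x,r)$ denotes the closed ball; $N_r(F)$ is the minimal number of closed $r$-balls centred in $F$ covering $F$. Lower dimension: $\dim_{\mathrm{L}} K=\sup\{s>0:\exists C>0\ \forall 0<r\leq R<1\ \forall x\in K,\ N_r(B(x,R)\cap K)\geq C(R/r)^s\}$ (with $\sup\varnothing=0$). A weak tangent of $K$ is any limit in the Hausdorff metric of a sequence of non-empty sets $\lambda_n(K-x_n)\cap B(0,1)$ with $x_n\in K$, $\lambda_n\geq1$ and $\lambda_n\to\infty$; $\operatorname{Tan}(K)$ is the set of weak tangents. The $s$-dimensional packing pre-measure of $E\subset\mathbb{R}^d$ is $\mathcal{P}^s_0(E)=\lim_{\delta\to0}\sup\{\sum_i(2r_i)^s:\{B(x_i,r_i)\}_i\text{ pairwise disjoint, }r_i\leq\delta,\ x_i\in E\}$, and the packing measure is $\mathcal{P}^s(E)=\inf\{\sum_i\mathcal{P}^s_0(E_i):E\subset\bigcup_iE_i\}$. *)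

theory Defs
  imports "HOL-Analysis.Analysis"
begin

definition cover_num :: "real \<Rightarrow> 'a::euclidean_space set \<Rightarrow> nat" where
  "cover_num r F = Inf {card C | C. finite C \<and> C \<subseteq> F \<and> F \<subseteq> (\<Union>x\<in>C. cball x r)}"

definition lower_dim_set :: "'a::euclidean_space set \<Rightarrow> real set" where
  "lower_dim_set K = {s. s > 0 \<and> (\<exists>C>0. \<forall>r R. 0 < r \<and> r \<le> R \<and> R < 1 \<longrightarrow>
      (\<forall>x\<in>K. real (cover_num r (cball x R \<inter> K)) \<ge> C * (R / r) powr s))}"

definition lower_dim :: "'a::euclidean_space set \<Rightarrow> real" where
  "lower_dim K = (if lower_dim_set K = {} then 0 else Sup (lower_dim_set K))"

text \<open>Hausdorff distance (for non-empty bounded sets).\<close>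
definition hausdorff_dist :: "'a::euclidean_space set \<Rightarrow> 'a set \<Rightarrow> real" where
  "hausdorff_dist A B = max (SUP a\<in>A. infdist a B) (SUP b\<in>B. infdist b A)"

definition weak_tangents :: "'a::euclidean_space set \<Rightarrow> 'a set set" where
  "weak_tangents K = {F. compact F \<and> F \<noteq> {} \<and>
     (\<exists>(x::nat \<Rightarrow> 'a) (lam::nat \<Rightarrow> real).
        (\<forall>n. x n \<in> K \<and> lam n \<ge> 1 \<and>
             (\<lambda>y. lam n *\<^sub>R (y - x n)) ` K \<inter> cball 0 1 \<noteq> {}) \<and>
        filterlim lam at_top sequentially \<and>
        (\<lambda>n. hausdorff_dist ((\<lambda>y. lam n *\<^sub>R (y - x n)) ` K \<inter> cball 0 1) F) \<longlonglongrightarrow> 0)}"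

definition packing_sums :: "real \<Rightarrow> real \<Rightarrow> 'a::euclidean_space set \<Rightarrow> ennreal set" where
  "packing_sums s \<delta> E = {(\<Sum>\<^sub>\<infinity>p\<in>P. ennreal ((2 * snd p) powr s)) | P.
      countable P \<and> (\<forall>p\<in>P. fst p \<in> E \<and> 0 < snd p \<and> snd p \<le> \<delta>) \<and>
      (\<forall>p\<in>P. \<forall>q\<in>P. p \<noteq> q \<longrightarrow> cball (fst p) (snd p) \<inter> cball (fst q) (snd q) = {})}"

text \<open>Packing pre-measure: the limit as \<delta> \<rightarrow> 0 of the (monotone in \<delta>) suprema.\<close>
definition packing_premeasure :: "real \<Rightarrow> 'a::euclidean_space set \<Rightarrow> ennreal" where
  "packing_premeasure s E = Lim (at_right 0) (\<lambda>\<delta>. Sup (packing_sums s \<delta> E))"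

definition packing_measure :: "real \<Rightarrow> 'a::euclidean_space set \<Rightarrow> ennreal" where
  "packing_measure s E = Inf {(\<Sum>i. packing_premeasure s (Es i)) | Es :: nat \<Rightarrow> 'a set.
      E \<subseteq> (\<Union>i. Es i)}"

end

theory Submission
  imports Defs "HOL-Complex_Analysis.Great_Picard"
begin

text \<open>
  Call a ball \<open>B(y, u)\<close> centred in \<open>K\<close> rich (for a ratio \<open>T\<close>) if it contains disjoint closed
  balls \<open>B(x\<^sub>i, \<rho>\<^sub>i)\<close> centred in \<open>K\<close> with \<open>u / T \<le> \<rho>\<^sub>i \<le> u\<close> and \<open>\<Sum> (\<rho>\<^sub>i / u) powr \<beta> > 4 powr \<beta>\<close>.
  If all small balls were rich, replacing each \<open>B(x\<^sub>i, \<rho>\<^sub>i)\<close> by \<open>B(x\<^sub>i, \<rho>\<^sub>i / 3)\<close> and iterating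
  down to scale \<open>r\<close> would produce about \<open>(R / r) powr s\<close> disjoint \<open>r\<close>-balls in every \<open>B(x, R)\<close>
  for some \<open>s > \<beta>\<close>, contradicting \<open>\<beta> = dim\<^sub>L K\<close>.  So for every \<open>T\<close> there are arbitrarily
  small poor balls.  Blowing \<open>K\<close> up at poor balls with \<open>T \<rightarrow> \<infinity>\<close> and extracting a Hausdorff
  limit (Blaschke selection) gives a weak tangent \<open>F\<close> in which every disjoint family of closed
  balls of radii at most 1 satisfies \<open>\<Sum> \<rho>\<^sub>i powr \<beta> \<le> 4 powr \<beta>\<close>; hence
  \<open>P\<^sup>\<beta>\<^sub>0(F) \<le> 8 powr \<beta> \<le> 257 powr \<beta>\<close>.
\<close>

section \<open>Disjoint families of closed balls\<close>

abbreviation disjoint_cballs :: "('a::metric_space \<times> real) set \<Rightarrow> bool" where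
  "disjoint_cballs Q \<equiv> disjoint_family_on (\<lambda>p. cball (fst p) (snd p)) Q"

lemma cball_Int_cball_empty_iff:
  fixes a b :: "'a::real_normed_vector"
  assumes "0 \<le> r" "0 \<le> s"
  shows "cball a r \<inter> cball b s = {} \<longleftrightarrow> r + s < dist a b"
proof
  assume disj: "cball a r \<inter> cball b s = {}"
  show "r + s < dist a b"
  proof (rule ccontr)
    assume "\<not> r + s < dist a b"
    define t where "t = r / (r + s)"
    have t: "0 \<le> t" "t \<le> 1" "t * (r + s) = r" "(1 - t) * (r + s) = s"
      using assms by (cases "r + s = 0"; simp add: t_def field_simps)+
    have "t * dist a b \<le> r" "(1 - t) * dist a b \<le> s"
      using \<open>\<not> r + s < dist a b\<close> t by (metis mult_left_mono diff_ge_0_iff_ge not_le)+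
    moreover have "b - (a + t *\<^sub>R (b - a)) = (1 - t) *\<^sub>R (b - a)"
      by (simp add: algebra_simps)
    ultimately have "a + t *\<^sub>R (b - a) \<in> cball a r \<inter> cball b s"
      using t by (simp add: dist_norm norm_minus_commute)
    with disj show False by blast
  qed
qed (rule disjoint_cballI)


lemma disjoint_cballs_iff_dist:
  fixes Q :: "('a::real_normed_vector \<times> real) set"
  assumes "\<And>p. p \<in> Q \<Longrightarrow> 0 \<le> snd p"
  shows "disjoint_cballs Q \<longleftrightarrow>
           (\<forall>p\<in>Q. \<forall>q\<in>Q. p \<noteq> q \<longrightarrow> snd p + snd q < dist (fst p) (fst q))"
  using assms by (simp add: disjoint_family_on_def cball_Int_cball_empty_iff)

lemma disjoint_cballs_image:
  fixes f :: "'b \<Rightarrow> 'a::real_normed_vector"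
  assumes disj: "disjoint_family_on (\<lambda>p. cball (f p) (g p)) P"
    and nonneg: "\<And>p. p \<in> P \<Longrightarrow> 0 \<le> g p"
  shows "inj_on (\<lambda>p. (f p, g p)) P" "disjoint_cballs ((\<lambda>p. (f p, g p)) ` P)"
proof -
  show "inj_on (\<lambda>p. (f p, g p)) P"
  proof (rule inj_onI, rule ccontr)
    fix p q assume pq: "p \<in> P" "q \<in> P" "(f p, g p) = (f q, g q)" "p \<noteq> q"
    then have "f p \<in> cball (f p) (g p) \<inter> cball (f q) (g q)" using nonneg by auto
    with disj pq show False unfolding disjoint_family_on_def by blast
  qed
  show "disjoint_cballs ((\<lambda>p. (f p, g p)) ` P)"
    using disj unfolding disjoint_family_on_def by fastforce
qed

section \<open>Covering numbers and the lower dimension\<close>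

lemma cover_num_le_card:
  assumes "finite E" "E \<subseteq> S" "S \<subseteq> (\<Union>e\<in>E. cball e r)"
  shows "cover_num r S \<le> card E"
  unfolding cover_num_def using assms by (intro cInf_lower) auto

lemma card_disjoint_cballs_le_cover_num:
  fixes S :: "'a::euclidean_space set"
  assumes "compact S" "0 < r" "finite Q" "disjoint_cballs Q"
    and Q: "\<And>p. p \<in> Q \<Longrightarrow> fst p \<in> S \<and> r \<le> snd p"
  shows "card Q \<le> cover_num r S"
proof -
  obtain C0 where C0: "C0 \<subseteq> S" "finite C0" "S \<subseteq> (\<Union>x\<in>C0. ball x r)"
    using compactE_image[OF assms(1), of S "\<lambda>x. ball x r"] \<open>0 < r\<close> by force
  then have "S \<subseteq> (\<Union>x\<in>C0. cball x r)" by force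
  with C0 have nonempty: "{card C | C. finite C \<and> C \<subseteq> S \<and> S \<subseteq> (\<Union>x\<in>C. cball x r)} \<noteq> {}"
    by auto
  have sep: "snd p + snd q < dist (fst p) (fst q)" if "p \<in> Q" "q \<in> Q" "p \<noteq> q" for p q
  proof -
    have "\<And>p. p \<in> Q \<Longrightarrow> 0 \<le> snd p" using Q \<open>0 < r\<close> by force
    with \<open>disjoint_cballs Q\<close> that show ?thesis by (simp add: disjoint_cballs_iff_dist)
  qed
  have "card Q \<le> card C" if C: "finite C" "C \<subseteq> S" "S \<subseteq> (\<Union>x\<in>C. cball x r)" for C
  proof -
    have "\<exists>c\<in>C. dist c (fst p) \<le> r" if "p \<in> Q" for p
      using Q[OF that] C(3) by (force simp: subset_iff)
    then obtain g where g: "\<And>p. p \<in> Q \<Longrightarrow> g p \<in> C \<and> dist (g p) (fst p) \<le> r"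
      by metis
    have "inj_on g Q"
    proof (rule inj_onI, rule ccontr)
      fix p q assume pq: "p \<in> Q" "q \<in> Q" "g p = g q" "p \<noteq> q"
      have "dist (fst p) (fst q) \<le> dist (g p) (fst p) + dist (g p) (fst q)"
        by (rule dist_triangle3)
      with sep[OF pq(1,2,4)] show False
        using g[OF pq(1)] g[OF pq(2)] Q[OF pq(1)] Q[OF pq(2)] pq(3) by simp
    qed
    with g C show ?thesis by (intro card_inj_on_le) auto
  qed
  with nonempty show ?thesis unfolding cover_num_def by (intro cInf_greatest) auto
qed

lemma card_separated_le:
  fixes E :: "'a::euclidean_space set"
  assumes "finite E" "E \<subseteq> cball x R" "0 < r" "0 \<le> R"
    and sep: "\<And>a b. a \<in> E \<Longrightarrow> b \<in> E \<Longrightarrow> a \<noteq> b \<Longrightarrow> r < dist a b"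
  shows "real (card E) \<le> ((2 * R + r) / r) ^ DIM('a)"
proof -
  define v where "v \<rho> = unit_ball_vol (real DIM('a)) * \<rho> ^ DIM('a)" for \<rho> :: real
  have "disjoint_family_on (\<lambda>e. ball e (r/2)) E"
    using sep by (auto simp: disjoint_family_on_def intro!: disjoint_ballI less_imp_le)
  then have "emeasure lborel (\<Union>e\<in>E. ball e (r/2)) = (\<Sum>e\<in>E. emeasure lborel (ball e (r/2)))"
    using assms by (intro sum_emeasure[symmetric]) auto
  also have "\<dots> = ennreal (real (card E) * v (r/2))"
    using assms by (simp add: emeasure_ball v_def ennreal_mult ennreal_of_nat_eq_real_of_nat)
  finally have "ennreal (real (card E) * v (r/2)) = emeasure lborel (\<Union>e\<in>E. ball e (r/2))" ..
  also have "\<dots> \<le> emeasure lborel (ball x (R + r/2))"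
  proof (rule emeasure_mono)
    show "(\<Union>e\<in>E. ball e (r/2)) \<subseteq> ball x (R + r/2)"
    proof
      fix z assume "z \<in> (\<Union>e\<in>E. ball e (r/2))"
      then obtain e where "e \<in> E" "dist e z < r/2" by auto
      moreover from this have "dist x e \<le> R" using assms(2) by auto
      ultimately show "z \<in> ball x (R + r/2)" using dist_triangle[of x z e] by simp
    qed
  qed simp
  also have "\<dots> = ennreal (v (R + r/2))"
    using assms by (simp add: emeasure_ball v_def)
  finally have "real (card E) * v (r/2) \<le> v (R + r/2)"
    using assms by (subst (asm) ennreal_le_iff) (auto simp: v_def)
  then have "real (card E) * (r/2) ^ DIM('a) \<le> (R + r/2) ^ DIM('a)"
    by (simp add: v_def)
  with \<open>0 < r\<close> show ?thesis
    by (simp add: field_simps power_divide)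
qed

lemma cover_num_le_cball:
  fixes S :: "'a::euclidean_space set"
  assumes "S \<subseteq> cball x R" "0 < r" "0 \<le> R"
  shows "real (cover_num r S) \<le> ((2 * R + r) / r) ^ DIM('a)"
proof -
  define sep where "sep E \<longleftrightarrow> finite E \<and> E \<subseteq> S \<and> (\<forall>a\<in>E. \<forall>b\<in>E. a \<noteq> b \<longrightarrow> r < dist a b)" for E
  define B where "B = ((2 * R + r) / r) ^ DIM('a)"
  have bound: "real (card E) \<le> B" if "sep E" for E
    using that assms unfolding sep_def B_def by (intro card_separated_le[of E x R r]) auto
  have "\<forall>E. sep E \<longrightarrow> card E < nat \<lceil>B\<rceil> + 1"
  proof (intro allI impI)
    fix E assume "sep E"
    from bound[OF this] have "card E \<le> nat \<lceil>B\<rceil>" by linarith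
    then show "card E < nat \<lceil>B\<rceil> + 1" by simp
  qed
  moreover have "sep {}" by (simp add: sep_def)
  ultimately obtain E where E: "sep E" and maximal: "\<And>E'. sep E' \<Longrightarrow> card E' \<le> card E"
    using ex_has_greatest_nat[of sep "{}" card "nat \<lceil>B\<rceil> + 1"] by metis
  have "S \<subseteq> (\<Union>e\<in>E. cball e r)"
  proof
    fix y assume "y \<in> S"
    show "y \<in> (\<Union>e\<in>E. cball e r)"
    proof (rule ccontr)
      assume "y \<notin> (\<Union>e\<in>E. cball e r)"
      then have far: "\<forall>e\<in>E. r < dist e y" by (simp add: not_le)
      with \<open>0 < r\<close> have "y \<notin> E" by fastforce
      have "sep (insert y E)"
        using E far \<open>y \<in> S\<close> unfolding sep_def by (auto simp: dist_commute)
      from maximal[OF this] \<open>y \<notin> E\<close> E show False by (simp add: sep_def)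
    qed
  qed
  with E have "cover_num r S \<le> card E"
    by (intro cover_num_le_card) (auto simp: sep_def)
  with bound[OF E] show ?thesis by (simp add: B_def)
qed

lemma lower_dim_set_le_DIM:
  fixes K :: "'a::euclidean_space set"
  assumes "K \<noteq> {}" "s \<in> lower_dim_set K"
  shows "s \<le> DIM('a)"
proof (rule ccontr)
  assume "\<not> s \<le> DIM('a)"
  define d where "d = real DIM('a)"
  obtain C where "C > 0" and low: "\<And>r R x. 0 < r \<Longrightarrow> r \<le> R \<Longrightarrow> R < 1 \<Longrightarrow> x \<in> K \<Longrightarrow>
      C * (R / r) powr s \<le> real (cover_num r (cball x R \<inter> K))"
    using assms(2) unfolding lower_dim_set_def by blast
  obtain x where "x \<in> K" using assms(1) by blast
  have "((\<lambda>r. r powr (s - d)) \<longlongrightarrow> 0) (at_right 0)"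
    using \<open>\<not> s \<le> DIM('a)\<close>
    by (intro tendsto_zero_powrI tendsto_ident_at eventually_at_rightI[of 0 1]) (auto simp: d_def)
  then have "\<forall>\<^sub>F r in at_right 0. r powr (s - d) < C / 2 powr (s + d)"
    using \<open>C > 0\<close> by (intro order_tendstoD) auto
  moreover have "\<forall>\<^sub>F r in at_right 0. 0 < r \<and> r \<le> (1/2 :: real)"
    by (intro eventually_at_rightI[of 0 "1/2"]) auto
  ultimately obtain r where r: "0 < r" "r \<le> 1/2" "r powr (s - d) < C / 2 powr (s + d)"
    using eventually_happens'[OF trivial_limit_at_right_real] eventually_conj by blast
  have "C * (1 / (2 * r)) powr s \<le> real (cover_num r (cball x (1/2) \<inter> K))"
    using low[of r "1/2" x] r \<open>x \<in> K\<close> by simp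
  also have "\<dots> \<le> ((1 + r) / r) ^ DIM('a)"
    using cover_num_le_cball[of "cball x (1/2) \<inter> K" x "1/2" r] r by simp
  also have "\<dots> \<le> (2 / r) ^ DIM('a)"
    using r by (intro power_mono) (auto simp: divide_right_mono)
  finally have "C * (1 / (2 * r)) powr s \<le> (2 / r) powr d"
    using r by (simp add: d_def powr_realpow)
  moreover have "(1 / (2 * r)) powr s = 1 / (2 powr s * r powr s)" "(2 / r) powr d = 2 powr d / r powr d"
    using r by (simp_all add: powr_divide powr_mult)
  ultimately have "C * (1 / (2 powr s * r powr s)) \<le> 2 powr d / r powr d"
    by metis
  then have "C \<le> 2 powr s * 2 powr d * (r powr s / r powr d)"
    using r by (simp add: field_simps)
  also have "\<dots> = 2 powr (s + d) * r powr (s - d)"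
    by (simp add: powr_add powr_diff)
  finally show False
    using r(3) by (simp add: field_simps)
qed

lemma le_lower_dim:
  fixes K :: "'a::euclidean_space set"
  assumes "K \<noteq> {}" "s \<in> lower_dim_set K"
  shows "s \<le> lower_dim K"
proof -
  have "bdd_above (lower_dim_set K)"
    using lower_dim_set_le_DIM[OF assms(1)] by (intro bdd_aboveI) blast
  with assms show ?thesis unfolding lower_dim_def by (auto intro: cSup_upper)
qed

lemma lower_dim_nonneg:
  fixes K :: "'a::euclidean_space set"
  assumes "K \<noteq> {}"
  shows "0 \<le> lower_dim K"
proof (cases "lower_dim_set K = {}")
  case False
  then obtain s where "s \<in> lower_dim_set K" by blast
  with le_lower_dim[OF assms this] show ?thesis by (auto simp: lower_dim_set_def)
qed (simp add: lower_dim_def)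

section \<open>Rich and splitting balls\<close>

definition finite_packing :: "'a::metric_space set \<Rightarrow> 'a set \<Rightarrow> real \<Rightarrow> real \<Rightarrow> ('a \<times> real) set \<Rightarrow> bool" where
  "finite_packing K S r r' Q \<longleftrightarrow> finite Q \<and> disjoint_cballs Q \<and>
     (\<forall>p\<in>Q. fst p \<in> K \<and> cball (fst p) (snd p) \<subseteq> S \<and> r \<le> snd p \<and> snd p \<le> r')"

lemma finite_packing_mono:
  "S \<subseteq> S' \<Longrightarrow> finite_packing K S r r' Q \<Longrightarrow> finite_packing K S' r r' Q"
  unfolding finite_packing_def by blast

lemma finite_packing_UN:
  fixes Q0 :: "('a::real_normed_vector \<times> real) set"
  assumes "finite Q0" "disjoint_cballs Q0" "0 \<le> r"
    and children: "\<And>p. p \<in> Q0 \<Longrightarrow> finite_packing K (cball (fst p) (snd p)) r r' (Qf p)"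
    and "\<And>p. p \<in> Q0 \<Longrightarrow> cball (fst p) (snd p) \<subseteq> S"
  shows "finite_packing K S r r' (\<Union>p\<in>Q0. Qf p)"
    "(\<Sum>q\<in>(\<Union>p\<in>Q0. Qf p). f q) = (\<Sum>p\<in>Q0. \<Sum>q\<in>Qf p. f q)"
proof -
  have parents: "cball (fst p) (snd p) \<inter> cball (fst p') (snd p') = {}"
    if "p \<in> Q0" "p' \<in> Q0" "p \<noteq> p'" for p p'
    using assms(2) that by (auto simp: disjoint_family_on_def)
  have nested: "cball (fst q) (snd q) \<subseteq> cball (fst p) (snd p)" if "p \<in> Q0" "q \<in> Qf p" for p q
    using children[OF that(1)] that(2) by (auto simp: finite_packing_def)
  have centre: "fst q \<in> cball (fst q) (snd q)" if "p \<in> Q0" "q \<in> Qf p" for p q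
    using children[OF that(1)] that(2) \<open>0 \<le> r\<close> by (force simp: finite_packing_def)
  have "disjoint_family_on Qf Q0"
    unfolding disjoint_family_on_def
  proof (intro ballI impI equals0I)
    fix p p' q assume "p \<in> Q0" "p' \<in> Q0" "p \<noteq> p'" "q \<in> Qf p \<inter> Qf p'"
    with nested centre have "fst q \<in> cball (fst p) (snd p) \<inter> cball (fst p') (snd p')" by blast
    with parents \<open>p \<in> Q0\<close> \<open>p' \<in> Q0\<close> \<open>p \<noteq> p'\<close> show False by blast
  qed
  with assms(1) children show "(\<Sum>q\<in>(\<Union>p\<in>Q0. Qf p). f q) = (\<Sum>p\<in>Q0. \<Sum>q\<in>Qf p. f q)"
    by (intro sum.UNION_disjoint_family) (auto simp: finite_packing_def)
  have "disjoint_cballs (\<Union>p\<in>Q0. Qf p)"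
    unfolding disjoint_family_on_def
  proof (intro ballI impI)
    fix q q' assume "q \<in> (\<Union>p\<in>Q0. Qf p)" "q' \<in> (\<Union>p\<in>Q0. Qf p)" "q \<noteq> q'"
    then obtain p p' where pp': "p \<in> Q0" "q \<in> Qf p" "p' \<in> Q0" "q' \<in> Qf p'" by blast
    show "cball (fst q) (snd q) \<inter> cball (fst q') (snd q') = {}"
    proof (cases "p = p'")
      case True
      with children pp' \<open>q \<noteq> q'\<close> show ?thesis by (auto simp: finite_packing_def disjoint_family_on_def)
    next
      case False
      with parents nested pp' show ?thesis by blast
    qed
  qed
  with assms children show "finite_packing K S r r' (\<Union>p\<in>Q0. Qf p)"
    unfolding finite_packing_def by fast
qed

definition rich_ball :: "'a::metric_space set \<Rightarrow> real \<Rightarrow> real \<Rightarrow> 'a \<Rightarrow> real \<Rightarrow> bool" where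
  "rich_ball K b T y u \<longleftrightarrow> (\<exists>Q. finite Q \<and> disjoint_cballs Q \<and>
      (\<forall>p\<in>Q. fst p \<in> K \<inter> cball y u \<and> u / T \<le> snd p \<and> snd p \<le> u) \<and>
      (\<Sum>p\<in>Q. (snd p / u) powr b) > 4 powr b)"

definition splitting_ball :: "'a::metric_space set \<Rightarrow> real \<Rightarrow> real \<Rightarrow> 'a \<Rightarrow> real \<Rightarrow> bool" where
  "splitting_ball K T s y u \<longleftrightarrow> (\<exists>Q. finite Q \<and> disjoint_cballs Q \<and>
      (\<forall>p\<in>Q. fst p \<in> K \<inter> cball y u \<and> u / T \<le> snd p \<and> snd p \<le> u) \<and>
      u powr s \<le> (\<Sum>p\<in>Q. (snd p / 3) powr s))"

text \<open>For \<open>b = 0\<close> the sums count balls, so richness only says that there are at least two.\<close>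

lemma rich_sum_thirds_ge:
  fixes Q :: "('a \<times> real) set"
  assumes "0 \<le> b" "0 < u" "finite Q" "\<And>p. p \<in> Q \<Longrightarrow> 0 < snd p"
    and rich: "(\<Sum>p\<in>Q. (snd p / u) powr b) > 4 powr b"
  shows "(if b = 0 then 2 else (4/3) powr b) * u powr b \<le> (\<Sum>p\<in>Q. (snd p / 3) powr b)"
proof (cases "b = 0")
  case True
  have count: "(\<Sum>p\<in>Q. (snd p / c) powr b) = real (card Q)" if "0 < c" for c :: real
  proof -
    have "(\<Sum>p\<in>Q. (snd p / c) powr b) = (\<Sum>p\<in>Q. 1)"
      using True assms(4) that by (intro sum.cong) force+
    then show ?thesis by simp
  qed
  with rich \<open>0 < u\<close> True show ?thesis by simp
next
  case False
  have "(\<Sum>p\<in>Q. (snd p / 3) powr b) = (u / 3) powr b * (\<Sum>p\<in>Q. (snd p / u) powr b)"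
    using assms by (simp add: sum_distrib_left flip: powr_mult)
  also have "\<dots> \<ge> (u / 3) powr b * 4 powr b"
    using rich by (intro mult_left_mono) auto
  finally show ?thesis
    using False assms by (simp add: powr_divide powr_mult mult.commute)
qed

lemma rich_ball_splits:
  assumes "0 \<le> b" "1 \<le> T"
  obtains s where "b < s" "\<And>y u. 0 < u \<Longrightarrow> rich_ball K b T y u \<Longrightarrow> splitting_ball K T s y u"
proof
  define \<gamma> :: real where "\<gamma> = (if b = 0 then 2 else (4/3) powr b)"
  \<comment> \<open>Passing to the children costs a factor at most \<open>3 * T\<close> in radius and gains \<open>\<gamma>\<close> in
    content, so the exponent improves by \<open>\<theta>\<close> with \<open>(3 * T) powr \<theta> = \<gamma>\<close>.\<close>
  define \<theta> where "\<theta> = ln \<gamma> / ln (3 * T)"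
  have "\<gamma> > 1" using assms by (auto simp: \<gamma>_def)
  with assms have "\<theta> > 0" by (simp add: \<theta>_def)
  have scale: "(3 * T) powr \<theta> = \<gamma>"
    using \<open>\<gamma> > 1\<close> assms by (simp add: \<theta>_def powr_def)
  show "b < b + \<theta>" using \<open>\<theta> > 0\<close> by simp
  fix y u assume "0 < u" "rich_ball K b T y u"
  then obtain Q where Q: "finite Q" "disjoint_cballs Q"
    "\<forall>p\<in>Q. fst p \<in> K \<inter> cball y u \<and> u / T \<le> snd p \<and> snd p \<le> u"
    and rich: "(\<Sum>p\<in>Q. (snd p / u) powr b) > 4 powr b"
    unfolding rich_ball_def by blast
  have "0 < u / T" using \<open>0 < u\<close> assms(2) by simp
  with Q(3) have pos: "0 < snd p" if "p \<in> Q" for p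
    using that by (meson less_le_trans)
  have "u powr (b + \<theta>) = (u / (3 * T)) powr \<theta> * (\<gamma> * u powr b)"
    using \<open>0 < u\<close> \<open>\<gamma> > 1\<close> assms(2) scale by (simp add: powr_add powr_divide)
  also have "\<dots> \<le> (u / (3 * T)) powr \<theta> * (\<Sum>p\<in>Q. (snd p / 3) powr b)"
    using rich_sum_thirds_ge[OF assms(1) \<open>0 < u\<close> Q(1) pos rich]
    by (intro mult_left_mono) (auto simp: \<gamma>_def)
  also have "\<dots> \<le> (\<Sum>p\<in>Q. (snd p / 3) powr \<theta> * (snd p / 3) powr b)"
    unfolding sum_distrib_left
  proof (intro sum_mono mult_right_mono)
    fix p assume "p \<in> Q"
    then have "u / (3 * T) \<le> snd p / 3" using Q(3) by (auto simp: field_simps)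
    with \<open>0 < u\<close> \<open>\<theta> > 0\<close> assms(2) show "(u / (3 * T)) powr \<theta> \<le> (snd p / 3) powr \<theta>"
      by (intro powr_mono2) auto
  qed simp
  also have "\<dots> = (\<Sum>p\<in>Q. (snd p / 3) powr (b + \<theta>))"
    by (simp add: powr_add mult.commute)
  finally show "splitting_ball K T (b + \<theta>) y u"
    unfolding splitting_ball_def using Q by blast
qed

lemma splitting_ball_packing_step:
  fixes K :: "'a::euclidean_space set"
  assumes "splitting_ball K T s y u" "1 \<le> T" "0 < r" "3 * T * r \<le> u"
    and children: "\<And>x v. x \<in> K \<Longrightarrow> r \<le> v \<Longrightarrow> v \<le> u / 3 \<Longrightarrow>
      \<exists>Q. finite_packing K (cball x (2 * v)) r (3 * T * r) Q \<and> (v / 3) powr s \<le> (\<Sum>p\<in>Q. snd p powr s)"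
  shows "\<exists>Q. finite_packing K (cball y (2 * u)) r (3 * T * r) Q \<and> (u / 3) powr s \<le> (\<Sum>p\<in>Q. snd p powr s)"
proof -
  obtain Q0 where Q0: "finite Q0" "disjoint_cballs Q0"
    "\<And>p. p \<in> Q0 \<Longrightarrow> fst p \<in> K \<inter> cball y u \<and> u / T \<le> snd p \<and> snd p \<le> u"
    and gain: "u powr s \<le> (\<Sum>p\<in>Q0. (snd p / 3) powr s)"
    using assms(1) unfolding splitting_ball_def by blast
  have child: "r \<le> snd p / 3" if "p \<in> Q0" for p
  proof -
    have "u \<le> T * snd p" using Q0(3)[OF that] \<open>1 \<le> T\<close> by (simp add: field_simps)
    with \<open>3 * T * r \<le> u\<close> have "T * (3 * r) \<le> T * snd p" by linarith
    then show ?thesis using \<open>1 \<le> T\<close> by simp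
  qed
  \<comment> \<open>The child of \<open>B(x, \<rho>)\<close> is \<open>B(x, \<rho> / 3)\<close>; its packing lies in \<open>B(x, 2 \<rho> / 3) \<subseteq> B(x, \<rho>)\<close>, so
    the packings of different children are disjoint.\<close>
  have "\<forall>p\<in>Q0. \<exists>Q'. finite_packing K (cball (fst p) (snd p)) r (3 * T * r) Q' \<and>
      (snd p / 3 / 3) powr s \<le> (\<Sum>q\<in>Q'. snd q powr s)"
  proof
    fix p assume "p \<in> Q0"
    with Q0(3) child children[of "fst p" "snd p / 3"] obtain Q' where
      "finite_packing K (cball (fst p) (2 * (snd p / 3))) r (3 * T * r) Q'"
      "(snd p / 3 / 3) powr s \<le> (\<Sum>q\<in>Q'. snd q powr s)"
      by auto
    moreover have "cball (fst p) (2 * (snd p / 3)) \<subseteq> cball (fst p) (snd p)"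
      using child[OF \<open>p \<in> Q0\<close>] \<open>0 < r\<close> by auto
    ultimately show "\<exists>Q'. finite_packing K (cball (fst p) (snd p)) r (3 * T * r) Q' \<and>
        (snd p / 3 / 3) powr s \<le> (\<Sum>q\<in>Q'. snd q powr s)"
      using finite_packing_mono by blast
  qed
  from bchoice[OF this] obtain Qf where Qf: "\<forall>p\<in>Q0. finite_packing K (cball (fst p) (snd p)) r (3 * T * r) (Qf p) \<and>
      (snd p / 3 / 3) powr s \<le> (\<Sum>q\<in>Qf p. snd q powr s)" ..
  have packings: "finite_packing K (cball (fst p) (snd p)) r (3 * T * r) (Qf p)" if "p \<in> Q0" for p
    using Qf that by blast
  have inside: "cball (fst p) (snd p) \<subseteq> cball y (2 * u)" if "p \<in> Q0" for p
    using Q0(3)[OF that] by (simp add: cball_subset_cball_iff dist_commute)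
  note union = finite_packing_UN[OF Q0(1,2) less_imp_le[OF \<open>0 < r\<close>] packings inside]
  have "(u / 3) powr s \<le> (\<Sum>p\<in>Q0. (snd p / 3 / 3) powr s)"
    using divide_right_mono[OF gain, of "3 powr s"] by (simp only: powr_divide sum_divide_distrib) simp
  also have "\<dots> \<le> (\<Sum>p\<in>Q0. \<Sum>q\<in>Qf p. snd q powr s)"
    using Qf by (intro sum_mono) simp
  also have "\<dots> = (\<Sum>q\<in>(\<Union>p\<in>Q0. Qf p). snd q powr s)"
    by (rule union(2)[symmetric])
  finally show ?thesis
    using union(1) by blast
qed

lemma packing_from_splitting:
  fixes K :: "'a::euclidean_space set"
  assumes split: "\<And>y u. y \<in> K \<Longrightarrow> 0 < u \<Longrightarrow> u < R0 \<Longrightarrow> splitting_ball K T s y u"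
    and "1 \<le> T" "0 \<le> s"
  shows "y \<in> K \<Longrightarrow> 0 < r \<Longrightarrow> r \<le> u \<Longrightarrow> u < R0 \<Longrightarrow> u < 3 ^ n * r \<Longrightarrow>
    \<exists>Q. finite_packing K (cball y (2 * u)) r (3 * T * r) Q \<and> (u / 3) powr s \<le> (\<Sum>p\<in>Q. snd p powr s)"
proof (induction n arbitrary: y u)
  case 0
  then show ?case by simp
next
  case (Suc n)
  show ?case
  proof (cases "u < 3 * T * r")
    case True
    have "(u / 3) powr s \<le> u powr s"
      using Suc.prems \<open>0 \<le> s\<close> by (intro powr_mono2) auto
    with True Suc.prems \<open>1 \<le> T\<close> show ?thesis
      unfolding finite_packing_def
      by (intro exI[of _ "{(y, u)}"]) (simp add: disjoint_family_on_def cball_subset_cball_iff)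
  next
    case False
    show ?thesis
    proof (rule splitting_ball_packing_step[OF split \<open>1 \<le> T\<close> \<open>0 < r\<close>])
      fix x v assume "x \<in> K" "r \<le> v" "v \<le> u / 3"
      with Suc.prems show "\<exists>Q. finite_packing K (cball x (2 * v)) r (3 * T * r) Q \<and>
          (v / 3) powr s \<le> (\<Sum>p\<in>Q. snd p powr s)"
        by (intro Suc.IH) auto
    qed (use False Suc.prems in auto)
  qed
qed

lemma cover_num_ge_of_splitting:
  fixes K :: "'a::euclidean_space set"
  assumes "compact K" and split: "\<And>y u. y \<in> K \<Longrightarrow> 0 < u \<Longrightarrow> u < R0 \<Longrightarrow> splitting_ball K T s y u"
    and "1 \<le> T" "0 < s" "x \<in> K" "0 < r" "0 < u" "u < R0" "2 * u \<le> R"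
  shows "(u / (9 * T * r)) powr s \<le> real (cover_num r (cball x R \<inter> K))"
proof -
  define S where "S = cball x R \<inter> K"
  have "compact S" using \<open>compact K\<close> by (simp add: S_def closed_Int_compact)
  show ?thesis
  proof (cases "r \<le> u")
    case True
    obtain n where "u / r < 3 ^ n" using real_arch_pow[of 3 "u / r"] by auto
    then have "u < 3 ^ n * r" using \<open>0 < r\<close> by (simp add: field_simps)
    then obtain Q where Q: "finite_packing K (cball x (2 * u)) r (3 * T * r) Q"
      and sum: "(u / 3) powr s \<le> (\<Sum>p\<in>Q. snd p powr s)"
      using packing_from_splitting[OF split assms(3) _ \<open>x \<in> K\<close> \<open>0 < r\<close> True \<open>u < R0\<close>] assms(4)
      by fastforce
    have "(\<Sum>p\<in>Q. snd p powr s) \<le> (\<Sum>p\<in>Q. (3 * T * r) powr s)"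
      using Q \<open>0 < r\<close> assms(4) by (intro sum_mono powr_mono2) (auto simp: finite_packing_def)
    with sum have card: "(u / 3) powr s \<le> real (card Q) * (3 * T * r) powr s" by simp
    have "u / (9 * T * r) = (u / 3) / (3 * T * r)" by simp
    then have "(u / (9 * T * r)) powr s = (u / 3) powr s / (3 * T * r) powr s"
      by (simp only: powr_divide)
    also have "\<dots> \<le> real (card Q)"
      using card \<open>0 < r\<close> \<open>1 \<le> T\<close> by (simp add: divide_le_eq)
    also have "card Q \<le> cover_num r S"
    proof (rule card_disjoint_cballs_le_cover_num[OF \<open>compact S\<close> \<open>0 < r\<close>])
      fix p assume "p \<in> Q"
      with Q \<open>0 < r\<close> have "fst p \<in> cball x (2 * u)" "fst p \<in> K" "r \<le> snd p"
        by (auto simp: finite_packing_def subset_iff)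
      with \<open>2 * u \<le> R\<close> show "fst p \<in> S \<and> r \<le> snd p" by (auto simp: S_def)
    qed (use Q in \<open>simp_all add: finite_packing_def\<close>)
    finally show ?thesis by (simp add: S_def)
  next
    case False
    have "card {(x, r)} \<le> cover_num r S"
      using \<open>x \<in> K\<close> \<open>0 < r\<close> \<open>0 < u\<close> \<open>2 * u \<le> R\<close>
      by (intro card_disjoint_cballs_le_cover_num[OF \<open>compact S\<close>]) (auto simp: S_def disjoint_family_on_def)
    moreover have "u \<le> 9 * T * r"
      using False \<open>1 \<le> T\<close> \<open>0 < r\<close> mult_right_mono[of 1 "9 * T" r] by linarith
    then have "(u / (9 * T * r)) powr s \<le> 1"
      using \<open>0 < u\<close> \<open>0 < r\<close> \<open>1 \<le> T\<close> \<open>0 < s\<close> by (intro powr_le1) auto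
    ultimately show ?thesis by (simp add: S_def)
  qed
qed

lemma lower_dim_set_of_splitting:
  fixes K :: "'a::euclidean_space set"
  assumes "compact K" "1 \<le> T" "0 < R0" "0 < s"
    and split: "\<And>y u. y \<in> K \<Longrightarrow> 0 < u \<Longrightarrow> u < R0 \<Longrightarrow> splitting_ball K T s y u"
  shows "s \<in> lower_dim_set K"
proof -
  define m where "m = min 1 R0"
  have m: "0 < m" "m \<le> 1" "m \<le> R0" using assms by (auto simp: m_def)
  have "(m / (18 * T)) powr s * (R / r) powr s \<le> real (cover_num r (cball x R \<inter> K))"
    if rR: "0 < r" "r \<le> R" "R < 1" and "x \<in> K" for r R x
  proof -
    define u where "u = min R R0 / 2"
    have "m * R \<le> R0" using mult_right_le_one_le[of m R] rR m by linarith
    with rR m have u: "0 < u" "u < R0" "2 * u \<le> R" "m * R / 2 \<le> u"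
      using \<open>0 < R0\<close> by (auto simp: u_def mult_left_le_one_le)
    have "(m / (18 * T)) powr s * (R / r) powr s \<le> (u / (9 * T * r)) powr s"
      using u rR m assms(2,4) by (simp flip: powr_mult) (intro powr_mono2; simp add: field_simps)
    also have "\<dots> \<le> real (cover_num r (cball x R \<inter> K))"
      using cover_num_ge_of_splitting[OF assms(1) split assms(2,4) \<open>x \<in> K\<close> rR(1) u(1-3)] .
    finally show ?thesis .
  qed
  then show ?thesis
    unfolding lower_dim_set_def using assms(2,4) m
    by (intro CollectI conjI exI[of _ "(m / (18 * T)) powr s"]) simp_all
qed

lemma poor_ball_exists:
  fixes K :: "'a::euclidean_space set"
  assumes "compact K" "K \<noteq> {}" "1 \<le> T" "0 < R0"
  shows "\<exists>y\<in>K. \<exists>u. 0 < u \<and> u < R0 \<and> \<not> rich_ball K (lower_dim K) T y u"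
proof (rule ccontr)
  assume "\<not> ?thesis"
  then have rich: "rich_ball K (lower_dim K) T y u" if "y \<in> K" "0 < u" "u < R0" for y u
    using that by blast
  have "0 \<le> lower_dim K" by (rule lower_dim_nonneg[OF assms(2)])
  then obtain s where "lower_dim K < s"
    and split: "\<And>y u. 0 < u \<Longrightarrow> rich_ball K (lower_dim K) T y u \<Longrightarrow> splitting_ball K T s y u"
    using rich_ball_splits[OF _ assms(3)] by blast
  have "s \<in> lower_dim_set K"
  proof (rule lower_dim_set_of_splitting[OF assms(1,3,4)])
    show "0 < s" using \<open>0 \<le> lower_dim K\<close> \<open>lower_dim K < s\<close> by linarith
  qed (use split rich in blast)
  with le_lower_dim[OF assms(2)] \<open>lower_dim K < s\<close> show False by fastforce
qed

section \<open>Hausdorff limits\<close>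

lemma hausdorff_dist_le:
  fixes A F :: "'a::euclidean_space set"
  assumes "A \<noteq> {}" "F \<noteq> {}"
    and "\<And>a. a \<in> A \<Longrightarrow> infdist a F \<le> e" "\<And>y. y \<in> F \<Longrightarrow> infdist y A \<le> e"
  shows "0 \<le> hausdorff_dist A F" "hausdorff_dist A F \<le> e"
proof -
  show "hausdorff_dist A F \<le> e"
    unfolding hausdorff_dist_def using assms by (auto intro!: cSUP_least)
  obtain a where "a \<in> A" using assms(1) by blast
  have "bdd_above ((\<lambda>a. infdist a F) ` A)" using assms(3) by (intro bdd_aboveI) auto
  with \<open>a \<in> A\<close> have "infdist a F \<le> (SUP a\<in>A. infdist a F)" by (intro cSUP_upper)
  then show "0 \<le> hausdorff_dist A F"
    unfolding hausdorff_dist_def using infdist_nonneg[of a F] by linarith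
qed

lemma infdist_le_hausdorff_dist:
  fixes A F :: "'a::euclidean_space set"
  assumes "A \<noteq> {}" "bounded F" "y \<in> F"
  shows "infdist y A \<le> hausdorff_dist A F"
proof -
  obtain a where "a \<in> A" using assms(1) by blast
  obtain D where D: "\<And>z. z \<in> F \<Longrightarrow> dist a z \<le> D"
    using bounded_any_center[of F a] assms(2) by blast
  have "bdd_above ((\<lambda>z. infdist z A) ` F)"
  proof (rule bdd_aboveI)
    fix d assume "d \<in> (\<lambda>z. infdist z A) ` F"
    then obtain z where "z \<in> F" "d = infdist z A" by blast
    with infdist_le[OF \<open>a \<in> A\<close>, of z] D[of z] show "d \<le> D" by (simp add: dist_commute)
  qed
  with assms(3) have "infdist y A \<le> (SUP z\<in>F. infdist z A)" by (intro cSUP_upper)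
  then show ?thesis unfolding hausdorff_dist_def by simp
qed

lemma compact_pos_bounded_below:
  fixes g :: "'a::topological_space \<Rightarrow> real"
  assumes "compact C" "continuous_on C g" "\<And>y. y \<in> C \<Longrightarrow> 0 < g y"
  obtains \<epsilon> where "0 < \<epsilon>" "\<And>y. y \<in> C \<Longrightarrow> \<epsilon> \<le> g y"
proof (cases "C = {}")
  case False
  with continuous_attains_inf[OF assms(1) False assms(2)] obtain y0 where "y0 \<in> C" "\<forall>y\<in>C. g y0 \<le> g y"
    by blast
  with assms(3) that[of "g y0"] show ?thesis by blast
qed (use that[of 1] in simp)

lemma zero_set_of_infdist_limit:
  fixes A :: "nat \<Rightarrow> 'a::euclidean_space set"
  assumes "compact S" "\<And>n. A n \<noteq> {}" "\<And>n. A n \<subseteq> S"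
    and lim: "uniform_limit S (\<lambda>n x. infdist x (A n)) g sequentially"
  shows "continuous_on S g" "\<And>x. x \<in> S \<Longrightarrow> 0 \<le> g x"
    "compact {x \<in> S. g x = 0}" "{x \<in> S. g x = 0} \<noteq> {}"
proof -
  show "continuous_on S g"
    by (rule uniform_limit_theorem[OF always_eventually lim]) (auto intro!: continuous_intros)
  show nonneg: "0 \<le> g x" if "x \<in> S" for x
    using tendsto_uniform_limitI[OF lim that] by (rule tendsto_lowerbound) (simp_all add: infdist_nonneg)
  have "closed {x \<in> S. g x = 0}"
    using assms(1) \<open>continuous_on S g\<close> by (intro continuous_closed_preimage_constant compact_imp_closed)
  from compact_Int_closed[OF assms(1) this] show "compact {x \<in> S. g x = 0}"
    by (simp add: Int_absorb1)
  have "S \<noteq> {}" using assms(2,3) by blast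
  then obtain x where x: "x \<in> S" "\<forall>y\<in>S. g x \<le> g y"
    using continuous_attains_inf[OF assms(1) _ \<open>continuous_on S g\<close>] by blast
  have "g x \<le> e" if "0 < e" for e
  proof -
    obtain N where "\<forall>n\<ge>N. \<forall>y\<in>S. dist (infdist y (A n)) (g y) < e"
      using lim \<open>0 < e\<close> unfolding uniform_limit_sequentially_iff by blast
    moreover obtain a where "a \<in> A N" using assms(2) by blast
    ultimately have "g a < e" using assms(3) by (force simp: dist_real_def)
    with x \<open>a \<in> A N\<close> assms(3) show ?thesis by force
  qed
  then have "g x \<le> 0" by (meson dense not_le)
  with nonneg[OF x(1)] x(1) show "{x \<in> S. g x = 0} \<noteq> {}" by force
qed

lemma hausdorff_convergence_to_zero_set:
  fixes A :: "nat \<Rightarrow> 'a::euclidean_space set"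
  assumes "compact S" "\<And>n. A n \<noteq> {}" "\<And>n. A n \<subseteq> S"
    and lim: "uniform_limit S (\<lambda>n x. infdist x (A n)) g sequentially"
  defines "F \<equiv> {x \<in> S. g x = 0}"
  shows "(\<lambda>n. hausdorff_dist (A n) F) \<longlonglongrightarrow> 0"
proof (rule LIMSEQ_I)
  note zeros = zero_set_of_infdist_limit[OF assms(1-3) lim, folded F_def]
  fix \<eta> :: real assume "0 < \<eta>"
  define C where "C = S \<inter> {y. \<eta> / 2 \<le> infdist y F}"
  have "compact C"
    unfolding C_def using assms(1) by (intro compact_Int_closed closed_Collect_le continuous_intros)
  moreover have "0 < g y" if "y \<in> C" for y
  proof -
    have "y \<in> S" "\<eta> / 2 \<le> infdist y F" using that by (auto simp: C_def)
    with \<open>0 < \<eta>\<close> have "y \<notin> F" by auto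
    with zeros(2)[OF \<open>y \<in> S\<close>] \<open>y \<in> S\<close> show ?thesis by (auto simp: F_def)
  qed
  ultimately obtain \<epsilon> where "0 < \<epsilon>" and far: "\<And>y. y \<in> C \<Longrightarrow> \<epsilon> \<le> g y"
    using compact_pos_bounded_below continuous_on_subset[OF zeros(1)] by (metis C_def inf_le1)
  obtain N where N: "\<forall>n\<ge>N. \<forall>x\<in>S. \<bar>infdist x (A n) - g x\<bar> < min \<epsilon> (\<eta> / 2)"
    using lim \<open>0 < \<epsilon>\<close> \<open>0 < \<eta>\<close> unfolding uniform_limit_sequentially_iff dist_real_def
    by (metis min_less_iff_conj half_gt_zero)
  have "hausdorff_dist (A n) F \<in> {0 .. \<eta> / 2}" if "n \<ge> N" for n
  proof -
    have near_F: "infdist a F \<le> \<eta> / 2" if "a \<in> A n" for a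
    proof -
      have "a \<in> S" using that assms(3) by blast
      with N \<open>n \<ge> N\<close> that have "g a < \<epsilon>" by force
      with far \<open>a \<in> S\<close> show ?thesis by (force simp: C_def)
    qed
    have near_A: "infdist y (A n) \<le> \<eta> / 2" if "y \<in> F" for y
      using N \<open>n \<ge> N\<close> that by (force simp: F_def)
    show ?thesis
      using hausdorff_dist_le[OF assms(2) zeros(4) near_F near_A] by simp
  qed
  with \<open>0 < \<eta>\<close> show "\<exists>N. \<forall>n\<ge>N. norm (hausdorff_dist (A n) F - 0) < \<eta>" by force
qed

lemma blaschke_selection:
  fixes A :: "nat \<Rightarrow> 'a::euclidean_space set"
  assumes "compact S" "\<And>n. A n \<noteq> {}" "\<And>n. A n \<subseteq> S"
  obtains k F where "strict_mono k" "compact F" "F \<noteq> {}" "F \<subseteq> S"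
    "(\<lambda>n. hausdorff_dist (A (k n)) F) \<longlonglongrightarrow> 0"
proof -
  define f where "f n x = infdist x (A n)" for n x
  have uniformly_bounded: "norm (f n x) \<le> diameter S" if "x \<in> S" for n x
  proof -
    obtain a where "a \<in> A n" using assms(2) by blast
    then have "infdist x (A n) \<le> dist x a" by (rule infdist_le)
    also have "\<dots> \<le> diameter S"
      using \<open>a \<in> A n\<close> assms(1,3) that by (intro diameter_bounded_bound) (auto simp: compact_imp_bounded)
    finally show ?thesis by (simp add: f_def infdist_nonneg)
  qed
  have equicontinuous: "\<exists>d>0. \<forall>n y. y \<in> S \<and> norm (x - y) < d \<longrightarrow> norm (f n x - f n y) < e"
    if "x \<in> S" "0 < e" for x e
    using that infdist_triangle_abs unfolding f_def by (metis dist_norm order.strict_trans1 real_norm_def)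
  obtain g and k :: "nat \<Rightarrow> nat" where "continuous_on S g" "strict_mono k"
    and unif: "\<And>e. 0 < e \<Longrightarrow> \<exists>N. \<forall>n x. n \<ge> N \<and> x \<in> S \<longrightarrow> norm (f (k n) x - g x) < e"
    using Arzela_Ascoli[OF assms(1) uniformly_bounded equicontinuous] by blast
  have "uniform_limit S (\<lambda>n x. infdist x (A (k n))) g sequentially"
    unfolding uniform_limit_sequentially_iff using unif by (simp add: f_def dist_norm) blast
  note zeros = zero_set_of_infdist_limit[OF assms(1,2,3) this]
    and hausdorff_convergence_to_zero_set[OF assms(1,2,3) this]
  with that[OF \<open>strict_mono k\<close>] show ?thesis by blast
qed

lemma disjoint_cballs_perturb:
  fixes P :: "('a::real_normed_vector \<times> real) set"
  assumes "finite P" "disjoint_cballs P" "\<And>p. p \<in> P \<Longrightarrow> 0 \<le> snd p"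
  obtains \<epsilon> where "0 < \<epsilon>"
    "\<And>f. (\<And>p. p \<in> P \<Longrightarrow> dist (fst p) (f p) < \<epsilon>) \<Longrightarrow> disjoint_family_on (\<lambda>p. cball (f p) (snd p)) P"
proof -
  define gap where "gap = (\<lambda>(p, q). dist (fst p) (fst q) - snd p - snd q) ` (P \<times> P - Id)"
  have "finite gap" using assms(1) by (simp add: gap_def)
  have sep: "snd p + snd q < dist (fst p) (fst q)" if "p \<in> P" "q \<in> P" "p \<noteq> q" for p q
    using assms(2,3) disjoint_cballs_iff_dist[of P] that by blast
  then have "0 < g" if "g \<in> gap" for g
    using that by (force simp: gap_def)
  \<comment> \<open>The \<open>1\<close> keeps the minimum meaningful when \<open>gap = {}\<close>, i.e. when \<open>P\<close> has at most one element.\<close>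
  define \<epsilon> where "\<epsilon> = Min (insert 1 gap) / 2"
  have "0 < \<epsilon>" using \<open>finite gap\<close> \<open>\<And>g. g \<in> gap \<Longrightarrow> 0 < g\<close> by (simp add: \<epsilon>_def)
  have margin: "snd p + snd q + 2 * \<epsilon> \<le> dist (fst p) (fst q)" if "p \<in> P" "q \<in> P" "p \<noteq> q" for p q
  proof -
    have "dist (fst p) (fst q) - snd p - snd q \<in> insert 1 gap" using that by (force simp: gap_def)
    with \<open>finite gap\<close> have "Min (insert 1 gap) \<le> dist (fst p) (fst q) - snd p - snd q"
      by (intro Min_le) auto
    then show ?thesis by (simp add: \<epsilon>_def)
  qed
  show ?thesis
  proof (rule that[OF \<open>0 < \<epsilon>\<close>])
    fix f assume near: "\<And>p. p \<in> P \<Longrightarrow> dist (fst p) (f p) < \<epsilon>"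
    show "disjoint_family_on (\<lambda>p. cball (f p) (snd p)) P"
      unfolding disjoint_family_on_def
    proof (intro ballI impI disjoint_cballI)
      fix p q assume "p \<in> P" "q \<in> P" "p \<noteq> q"
      with margin[of p q] near[of p] near[of q]
        dist_triangle[of "fst p" "fst q" "f p"] dist_triangle[of "f p" "fst q" "f q"]
      show "snd p + snd q < dist (f p) (f q)" by (simp add: dist_commute)
    qed
  qed
qed

lemma disjoint_cballs_move_to_hausdorff_close:
  fixes F :: "'a::euclidean_space set"
  assumes "finite P" "disjoint_cballs P" "\<And>p. p \<in> P \<Longrightarrow> fst p \<in> F \<and> 0 \<le> snd p" "bounded F"
  obtains \<epsilon> where "0 < \<epsilon>" "\<And>B. B \<noteq> {} \<Longrightarrow> hausdorff_dist B F < \<epsilon> \<Longrightarrow>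
    \<exists>f. (\<forall>p\<in>P. f p \<in> B) \<and> inj_on (\<lambda>p. (f p, snd p)) P \<and> disjoint_cballs ((\<lambda>p. (f p, snd p)) ` P)"
proof -
  have nonneg: "\<And>p. p \<in> P \<Longrightarrow> 0 \<le> snd p" using assms(3) by blast
  obtain \<epsilon> where "0 < \<epsilon>" and perturb: "\<And>f. (\<And>p. p \<in> P \<Longrightarrow> dist (fst p) (f p) < \<epsilon>) \<Longrightarrow>
      disjoint_family_on (\<lambda>p. cball (f p) (snd p)) P"
    using disjoint_cballs_perturb[OF assms(1,2) nonneg] by blast
  have "\<exists>f. (\<forall>p\<in>P. f p \<in> B) \<and> inj_on (\<lambda>p. (f p, snd p)) P \<and> disjoint_cballs ((\<lambda>p. (f p, snd p)) ` P)"
    if "B \<noteq> {}" "hausdorff_dist B F < \<epsilon>" for B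
  proof -
    have "\<forall>p\<in>P. \<exists>a. a \<in> B \<and> dist (fst p) a < \<epsilon>"
    proof
      fix p assume "p \<in> P"
      with assms(3) have "fst p \<in> F" by blast
      from infdist_le_hausdorff_dist[OF \<open>B \<noteq> {}\<close> \<open>bounded F\<close> this] that(2)
      have "infdist (fst p) B < \<epsilon>" by linarith
      with \<open>B \<noteq> {}\<close> show "\<exists>a. a \<in> B \<and> dist (fst p) a < \<epsilon>"
        by (auto simp: infdist_notempty cINF_less_iff)
    qed
    from bchoice[OF this] obtain f where f: "\<forall>p\<in>P. f p \<in> B \<and> dist (fst p) (f p) < \<epsilon>" ..
    have "disjoint_family_on (\<lambda>p. cball (f p) (snd p)) P" by (rule perturb) (use f in blast)
    with f disjoint_cballs_image[OF this nonneg] show ?thesis by blast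
  qed
  from that[OF \<open>0 < \<epsilon>\<close> this] show ?thesis .
qed

lemma packing_bound_hausdorff_limit:
  fixes B :: "nat \<Rightarrow> 'a::euclidean_space set"
  assumes hd: "(\<lambda>n. hausdorff_dist (B n) F) \<longlonglongrightarrow> 0" and "\<And>n. B n \<noteq> {}" "bounded F"
    and "t \<longlonglongrightarrow> 0"
    and bound: "\<And>n Q. finite Q \<Longrightarrow> disjoint_cballs Q \<Longrightarrow> (\<forall>p\<in>Q. fst p \<in> B n \<and> t n \<le> snd p \<and> snd p \<le> 1)
        \<Longrightarrow> (\<Sum>p\<in>Q. snd p powr b) \<le> M"
    and P: "finite P" "disjoint_cballs P" "\<forall>p\<in>P. fst p \<in> F \<and> 0 < snd p \<and> snd p \<le> 1"
  shows "(\<Sum>p\<in>P. snd p powr b) \<le> M"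
proof (cases "P = {}")
  case True
  with bound[of "{}" 0] show ?thesis by (simp add: disjoint_family_on_def)
next
  case False
  have "\<And>p. p \<in> P \<Longrightarrow> fst p \<in> F \<and> 0 \<le> snd p" using P(3) by force
  then obtain \<epsilon> where "0 < \<epsilon>" and move: "\<And>B. B \<noteq> {} \<Longrightarrow> hausdorff_dist B F < \<epsilon> \<Longrightarrow>
    \<exists>f. (\<forall>p\<in>P. f p \<in> B) \<and> inj_on (\<lambda>p. (f p, snd p)) P \<and> disjoint_cballs ((\<lambda>p. (f p, snd p)) ` P)"
    using disjoint_cballs_move_to_hausdorff_close[OF P(1,2) _ \<open>bounded F\<close>] by blast
  define \<rho> where "\<rho> = Min (snd ` P)"
  have "0 < \<rho>" using P False by (simp add: \<rho>_def)
  have \<rho>_le: "\<rho> \<le> snd p" if "p \<in> P" for p using P(1) that by (simp add: \<rho>_def)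
  have "\<forall>\<^sub>F n in sequentially. hausdorff_dist (B n) F < \<epsilon> \<and> t n < \<rho>"
    using order_tendstoD(2)[OF hd \<open>0 < \<epsilon>\<close>] order_tendstoD(2)[OF \<open>t \<longlonglongrightarrow> 0\<close> \<open>0 < \<rho>\<close>]
    by (rule eventually_conj)
  then obtain n where n: "hausdorff_dist (B n) F < \<epsilon>" "t n < \<rho>"
    unfolding eventually_sequentially by blast
  with move[OF assms(2)] obtain f where f: "\<forall>p\<in>P. f p \<in> B n"
    and moved: "inj_on (\<lambda>p. (f p, snd p)) P" "disjoint_cballs ((\<lambda>p. (f p, snd p)) ` P)"
    by blast
  have "(\<Sum>p\<in>P. snd p powr b) = (\<Sum>q\<in>(\<lambda>p. (f p, snd p)) ` P. snd q powr b)"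
    using sum.reindex[OF moved(1), of "\<lambda>q. snd q powr b"] by (simp add: comp_def)
  also have "\<dots> \<le> M"
  proof (rule bound[OF _ moved(2)])
    show "\<forall>q\<in>(\<lambda>p. (f p, snd p)) ` P. fst q \<in> B n \<and> t n \<le> snd q \<and> snd q \<le> 1"
      using f P(3) n(2) \<rho>_le by fastforce
  qed (use P(1) in simp)
  finally show ?thesis .
qed

section \<open>Packing pre-measure\<close>

lemma packing_premeasure_eq_INF:
  "packing_premeasure s E = (INF \<delta>\<in>{0<..}. Sup (packing_sums s \<delta> E))"
proof -
  define \<phi> where "\<phi> \<delta> = Sup (packing_sums s \<delta> E)" for \<delta>
  have mono: "\<phi> \<delta>1 \<le> \<phi> \<delta>2" if "\<delta>1 \<le> \<delta>2" for \<delta>1 \<delta>2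
    unfolding \<phi>_def packing_sums_def using that by (intro Sup_subset_mono) fastforce
  have "(\<phi> \<longlongrightarrow> (INF \<delta>\<in>{0<..}. \<phi> \<delta>)) (at_right 0)"
  proof (rule decreasing_tendsto)
    show "\<forall>\<^sub>F \<delta> in at_right 0. (INF \<delta>\<in>{0<..}. \<phi> \<delta>) \<le> \<phi> \<delta>"
      using eventually_at_right_less[of "0::real"] by eventually_elim (simp add: INF_lower)
    fix x assume "(INF \<delta>\<in>{0<..}. \<phi> \<delta>) < x"
    then obtain \<delta>0 where "\<delta>0 \<in> {0<..}" "\<phi> \<delta>0 < x" unfolding INF_less_iff ..
    from \<open>\<delta>0 \<in> {0<..}\<close> have "\<forall>\<^sub>F \<delta> in at_right 0. \<delta> \<in> {0<..<\<delta>0}"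
      by (intro eventually_at_right_real) simp
    then show "\<forall>\<^sub>F \<delta> in at_right 0. \<phi> \<delta> < x"
    proof (rule eventually_mono)
      fix \<delta> :: real assume "\<delta> \<in> {0<..<\<delta>0}"
      then have "\<phi> \<delta> \<le> \<phi> \<delta>0" by (intro mono) simp
      then show "\<phi> \<delta> < x" using \<open>\<phi> \<delta>0 < x\<close> by (rule le_less_trans)
    qed
  qed
  then show ?thesis
    unfolding packing_premeasure_def \<phi>_def by (rule tendsto_Lim[OF trivial_limit_at_right_real])
qed

lemma packing_premeasure_le:
  fixes F :: "'a::euclidean_space set"
  assumes "0 < \<delta>"
    and bound: "\<And>P. finite P \<Longrightarrow> disjoint_cballs P \<Longrightarrow> (\<forall>p\<in>P. fst p \<in> F \<and> 0 < snd p \<and> snd p \<le> \<delta>)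
       \<Longrightarrow> (\<Sum>p\<in>P. snd p powr s) \<le> M"
  shows "packing_premeasure s F \<le> ennreal (2 powr s * M)"
proof -
  have "Sup (packing_sums s \<delta> F) \<le> ennreal (2 powr s * M)"
  proof (rule Sup_least)
    fix z assume "z \<in> packing_sums s \<delta> F"
    then obtain P where z: "z = (\<Sum>\<^sub>\<infinity>p\<in>P. ennreal ((2 * snd p) powr s))"
      and P: "\<forall>p\<in>P. fst p \<in> F \<and> 0 < snd p \<and> snd p \<le> \<delta>" "disjoint_cballs P"
      unfolding packing_sums_def disjoint_family_on_def by blast
    have "(\<Sum>\<^sub>\<infinity>p\<in>P. ennreal ((2 * snd p) powr s)) \<le> ennreal (2 powr s * M)"
    proof (rule infsum_le_finite_sums)
      show "(\<lambda>p. ennreal ((2 * snd p) powr s)) summable_on P"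
        by (rule nonneg_summable_on_complete) simp
      fix P' assume "finite P'" "P' \<subseteq> P"
      with P have "(\<Sum>p\<in>P'. snd p powr s) \<le> M"
        by (intro bound) (auto intro: disjoint_family_on_mono)
      then have "(\<Sum>p\<in>P'. (2 * snd p) powr s) \<le> 2 powr s * M"
        by (simp add: powr_mult flip: sum_distrib_left)
      moreover have "(\<Sum>p\<in>P'. ennreal ((2 * snd p) powr s)) = ennreal (\<Sum>p\<in>P'. (2 * snd p) powr s)"
        by (rule sum_ennreal) simp
      ultimately show "(\<Sum>p\<in>P'. ennreal ((2 * snd p) powr s)) \<le> ennreal (2 powr s * M)"
        by (simp add: ennreal_leI)
    qed
    with z show "z \<le> ennreal (2 powr s * M)" by simp
  qed
  moreover have "packing_premeasure s F \<le> Sup (packing_sums s \<delta> F)"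
    unfolding packing_premeasure_eq_INF using \<open>0 < \<delta>\<close> by (intro INF_lower) simp
  ultimately show ?thesis by simp
qed

lemma packing_premeasure_empty: "packing_premeasure s ({} :: 'a::euclidean_space set) = 0"
proof -
  have "packing_sums s \<delta> ({} :: 'a set) = {0}" for \<delta>
    unfolding packing_sums_def by (auto intro!: exI[of _ "{}"]) (metis all_not_in_conv infsum_empty surj_pair)
  then show ?thesis unfolding packing_premeasure_eq_INF by simp
qed

lemma packing_measure_le_premeasure:
  fixes F :: "'a::euclidean_space set"
  shows "packing_measure s F \<le> packing_premeasure s F"
proof -
  define Es where "Es i = (if i = 0 then F else {})" for i :: nat
  have "(\<lambda>i. packing_premeasure s (Es i)) = (\<lambda>i. if i = 0 then packing_premeasure s F else 0)"
    by (auto simp: Es_def packing_premeasure_empty)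
  then have "(\<Sum>i. packing_premeasure s (Es i)) = packing_premeasure s F"
    using sums_single[of 0 "\<lambda>_. packing_premeasure s F"] sums_unique by fastforce
  moreover have "F \<subseteq> (\<Union>i. Es i)" by (auto simp: Es_def)
  ultimately show ?thesis
    unfolding packing_measure_def by (metis (mono_tags, lifting) Inf_lower mem_Collect_eq)
qed

section \<open>Blow-ups at poor balls\<close>

lemma poor_ball_blowup_packing:
  fixes K :: "'a::euclidean_space set"
  assumes poor: "\<not> rich_ball K b T x R" and "0 < R" "0 < T"
    and Q: "finite Q" "disjoint_cballs Q"
      "\<forall>p\<in>Q. fst p \<in> (\<lambda>y. (1 / R) *\<^sub>R (y - x)) ` K \<inter> cball 0 1 \<and> 1 / T \<le> snd p \<and> snd p \<le> 1"
  shows "(\<Sum>p\<in>Q. snd p powr b) \<le> 4 powr b"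
proof -
  have nonneg: "0 \<le> snd p" "0 \<le> R * snd p" if "p \<in> Q" for p
  proof -
    show "0 \<le> snd p" using Q(3) that \<open>0 < T\<close> by (auto intro: order_trans[of 0 "1 / T"])
    with \<open>0 < R\<close> show "0 \<le> R * snd p" by simp
  qed
  have dist_scaled: "dist (R *\<^sub>R z) (R *\<^sub>R w) = R * dist z w" for z w :: 'a
    using \<open>0 < R\<close> by (simp add: dist_norm flip: scaleR_diff_right)
  have "disjoint_family_on (\<lambda>p. cball (x + R *\<^sub>R fst p) (R * snd p)) Q"
    using Q(2) nonneg \<open>0 < R\<close>
    by (simp add: disjoint_family_on_def cball_Int_cball_empty_iff dist_scaled flip: distrib_left)
  note scaled = disjoint_cballs_image[OF this nonneg(2)]
  have "\<forall>q\<in>(\<lambda>p. (x + R *\<^sub>R fst p, R * snd p)) ` Q. fst q \<in> K \<inter> cball x R \<and> R / T \<le> snd q \<and> snd q \<le> R"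
  proof
    fix q assume "q \<in> (\<lambda>p. (x + R *\<^sub>R fst p, R * snd p)) ` Q"
    then obtain p y where p: "p \<in> Q" "q = (x + R *\<^sub>R fst p, R * snd p)"
      and y: "y \<in> K" "fst p = (1 / R) *\<^sub>R (y - x)" "norm (fst p) \<le> 1"
      using Q(3) by fastforce
    have "x + R *\<^sub>R fst p = y" using y(2) \<open>0 < R\<close> by simp
    moreover have "dist x (x + R *\<^sub>R fst p) \<le> R"
      using y(3) \<open>0 < R\<close> by (simp add: dist_norm mult_left_le)
    moreover have "R / T \<le> R * snd p" "R * snd p \<le> R"
      using Q(3) p(1) \<open>0 < R\<close> by (auto simp: divide_inverse mult_left_le intro: mult_left_mono)
    ultimately show "fst q \<in> K \<inter> cball x R \<and> R / T \<le> snd q \<and> snd q \<le> R"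
      using p(2) y(1) by simp
  qed
  with poor Q(1) scaled(2)
  have "(\<Sum>q\<in>(\<lambda>p. (x + R *\<^sub>R fst p, R * snd p)) ` Q. (snd q / R) powr b) \<le> 4 powr b"
    unfolding rich_ball_def by (meson finite_imageI not_less)
  moreover have "(\<Sum>q\<in>(\<lambda>p. (x + R *\<^sub>R fst p, R * snd p)) ` Q. (snd q / R) powr b) = (\<Sum>p\<in>Q. snd p powr b)"
    using sum.reindex[OF scaled(1), of "\<lambda>q. (snd q / R) powr b"] \<open>0 < R\<close> by (simp add: comp_def)
  ultimately show ?thesis by simp
qed

lemma weak_tangentsI:
  fixes K :: "'a::euclidean_space set"
  assumes "compact F" "F \<noteq> {}" "\<And>n. x n \<in> K" "\<And>n. 0 < R n" "\<And>n. R n \<le> 1" "R \<longlonglongrightarrow> 0"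
    and "(\<lambda>n. hausdorff_dist ((\<lambda>y. (1 / R n) *\<^sub>R (y - x n)) ` K \<inter> cball 0 1) F) \<longlonglongrightarrow> 0"
  shows "F \<in> weak_tangents K"
proof -
  have "0 \<in> (\<lambda>y. (1 / R n) *\<^sub>R (y - x n)) ` K \<inter> cball 0 1" for n
    using assms(3) by (auto intro!: image_eqI[of 0 _ "x n"])
  moreover have "1 \<le> 1 / R n" for n
    using assms(4,5)[of n] by simp
  moreover have "filterlim (\<lambda>n. 1 / R n) at_top sequentially"
    using filterlim_inverse_at_top[OF assms(6)] assms(4) by (simp add: inverse_eq_divide)
  ultimately show ?thesis
    unfolding weak_tangents_def using assms(1,2,3,7)
    by (intro CollectI conjI exI[of _ x] exI[of _ "\<lambda>n. 1 / R n"]) blast+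
qed

lemma weak_tangent_with_packing_bound:
  fixes K :: "'a::euclidean_space set"
  assumes "compact K" "K \<noteq> {}"
  obtains F where "F \<in> weak_tangents K"
    "\<And>P. finite P \<Longrightarrow> disjoint_cballs P \<Longrightarrow> \<forall>p\<in>P. fst p \<in> F \<and> 0 < snd p \<and> snd p \<le> 1 \<Longrightarrow>
       (\<Sum>p\<in>P. snd p powr lower_dim K) \<le> 4 powr lower_dim K"
proof -
  define b where "b = lower_dim K"
  have "\<forall>n. \<exists>y\<in>K. \<exists>u>0. u < 1 / (real n + 1) \<and> \<not> rich_ball K b (real n + 1) y u"
    unfolding b_def by (intro allI poor_ball_exists[OF assms]) simp_all
  then obtain x R where x: "\<And>n. x n \<in> K" and R: "\<And>n. 0 < R n" "\<And>n. R n < 1 / (real n + 1)"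
    and poor: "\<And>n. \<not> rich_ball K b (real n + 1) (x n) (R n)"
    by metis
  define A where "A n = (\<lambda>y. (1 / R n) *\<^sub>R (y - x n)) ` K \<inter> cball 0 1" for n
  have "0 \<in> A n" for n
    using x[of n] by (auto simp: A_def intro!: image_eqI[of 0 _ "x n"])
  then have "A n \<noteq> {}" for n by blast
  moreover have "A n \<subseteq> cball 0 1" for n by (simp add: A_def)
  ultimately obtain k :: "nat \<Rightarrow> nat" and F where k: "strict_mono k"
    and F: "compact F" "F \<noteq> {}" "F \<subseteq> cball 0 1"
    and lim: "(\<lambda>n. hausdorff_dist (A (k n)) F) \<longlonglongrightarrow> 0"
    using blaschke_selection[OF compact_cball, of A 0 1] by blast
  have inverse_lim: "(\<lambda>n. 1 / (real (k n) + 1)) \<longlonglongrightarrow> 0"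
    using LIMSEQ_subseq_LIMSEQ[OF LIMSEQ_inverse_real_of_nat k] by (simp add: o_def inverse_eq_divide add.commute)
  have "(\<lambda>n. R (k n)) \<longlonglongrightarrow> 0"
    using R by (intro tendsto_sandwich[OF _ _ tendsto_const inverse_lim] always_eventually allI) (auto intro: less_imp_le)
  moreover have "R (k n) \<le> 1" for n
  proof -
    have "1 / (real (k n) + 1) \<le> 1" by simp
    with R(2)[of "k n"] show ?thesis by linarith
  qed
  ultimately have "F \<in> weak_tangents K"
    using lim x R(1) by (intro weak_tangentsI[OF F(1,2), where x = "x \<circ> k" and R = "R \<circ> k"])
      (simp_all add: A_def o_def)
  moreover have "(\<Sum>p\<in>P. snd p powr b) \<le> 4 powr b"
    if "finite P" "disjoint_cballs P" "\<forall>p\<in>P. fst p \<in> F \<and> 0 < snd p \<and> snd p \<le> 1" for P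
  proof (rule packing_bound_hausdorff_limit[OF lim _ _ inverse_lim _ that])
    show "A (k n) \<noteq> {}" for n by fact
    show "bounded F" using F(3) bounded_cball bounded_subset by blast
    fix n Q assume "finite Q" "disjoint_cballs Q" "\<forall>p\<in>Q. fst p \<in> A (k n) \<and> 1 / (real (k n) + 1) \<le> snd p \<and> snd p \<le> 1"
    then show "(\<Sum>p\<in>Q. snd p powr b) \<le> 4 powr b"
      by (intro poor_ball_blowup_packing[OF poor[of "k n"] R(1)]) (simp_all add: A_def add.commute)
  qed
  ultimately show ?thesis using that unfolding b_def by blast
qed

theorem theorem3p8:
  fixes K :: "'a::euclidean_space set"
  assumes "K \<noteq> {}" and "compact K"
  shows "\<exists>F\<in>weak_tangents K.
           packing_premeasure (lower_dim K) F \<le> ennreal (257 powr (lower_dim K))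
         \<and> packing_measure (lower_dim K) F < \<infinity>"
proof -
  obtain F where "F \<in> weak_tangents K" and packing:
    "\<And>P. finite P \<Longrightarrow> disjoint_cballs P \<Longrightarrow> \<forall>p\<in>P. fst p \<in> F \<and> 0 < snd p \<and> snd p \<le> 1 \<Longrightarrow>
       (\<Sum>p\<in>P. snd p powr lower_dim K) \<le> 4 powr lower_dim K"
    using weak_tangent_with_packing_bound[OF assms(2,1)] by blast
  have "packing_premeasure (lower_dim K) F \<le> ennreal (2 powr lower_dim K * 4 powr lower_dim K)"
    by (rule packing_premeasure_le[OF zero_less_one packing])
  also have "2 powr lower_dim K * 4 powr lower_dim K \<le> 257 powr lower_dim K"
    using lower_dim_nonneg[OF assms(1)] by (simp add: powr_mono2 flip: powr_mult)
  finally have premeasure: "packing_premeasure (lower_dim K) F \<le> ennreal (257 powr lower_dim K)"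
    by (simp add: ennreal_leI order_trans)
  have "packing_measure (lower_dim K) F \<le> packing_premeasure (lower_dim K) F"
    by (rule packing_measure_le_premeasure)
  also note premeasure
  also have "ennreal (257 powr lower_dim K) < \<infinity>" by simp
  finally have "packing_measure (lower_dim K) F < \<infinity>" .
  with premeasure \<open>F \<in> weak_tangents K\<close> show ?thesis by blast
qed

end
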